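(* Let $\vartheta$ be a primitive semi-compatible random substitution with topological entropy $s$. If $\vartheta$ satisfies the identical set condition, then $s=\frac{1}{\lambda}\bm q_1^\intercal\bm R$. If $\vartheta$ satisfies the disjoint set condition, then $s=\frac{1}{\lambda-1}\bm q_1^\intercal\bm R$.
   Context: Let $\mathcal A=\{a_1,\dots,a_n\}$ be a finite alphabet, $\mathcal A^+$ the finite non-empty words over $\mathcal A$. A random substitution is a map $\vartheta$ from $\mathcal A$ to finite non-empty subsets of $\mathcal A^+$, extended to words by $\vartheta(u_1\cdots u_m)=\{w_1\cdots w_m: w_k\in\vartheta(u_k)\}$ and to sets of words by unions; powers $\vartheta^m$ are compositions. $|u|_a$ is the number of occurrences of letter $a$ in $u$; $\Phi(u)=(|u|_{a_1},\dots,|u|_{a_n})^\intercal$. $\vartheta$ is semi-compatible if for each $a$ all words in $\vartheta(a)$ have the same $\Phi$. Substitution matrix $M_{ij}=|u|_{a_i}$, $u\in\vartheta(a_j)$; primitive means $M$ primitive, with Perron–Frobenius eigenvalue $\lambda$ and right PF eigenvector $\bm R$, $\|\bm R\|_1=1$. $\bm q_1=(\log\#\vartheta(a_1),\dots,\log\#\vartheta(a_n))^\intercal$. The language $\mathcal L$ is the set of all subwords of words in $\vartheta^m(a)$, $a\in\mathcal A$, $m\in\mathbb N$; $\mathcal L_\ell$ its words of length $\ell$; topological entropy $s=\lim_{\ell\to\infty}\frac1\ell\log\#\mathcal L_\ell$. Identical set condition: for all $i$, $m\in\mathbb N$, $u,v\in\vartheta(a_i)$: $\vartheta^m(u)=\vartheta^m(v)$.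 Disjoint set condition: for all $i$, $m\in\mathbb N$, $u\neq v\in\vartheta(a_i)$: $\vartheta^m(u)\cap\vartheta^m(v)=\varnothing$. *)

theory Defs
  imports Complex_Main "HOL-Library.Sublist"
begin

definition is_random_subst :: "('a \<Rightarrow> 'a list set) \<Rightarrow> bool" where
  "is_random_subst \<theta> \<longleftrightarrow> (\<forall>a. finite (\<theta> a) \<and> \<theta> a \<noteq> {} \<and> [] \<notin> \<theta> a)"

fun subst_word :: "('a \<Rightarrow> 'a list set) \<Rightarrow> 'a list \<Rightarrow> 'a list set" where
  "subst_word \<theta> [] = {[]}"
| "subst_word \<theta> (a # u) = {w @ v | w v. w \<in> \<theta> a \<and> v \<in> subst_word \<theta> u}"

definition subst_set :: "('a \<Rightarrow> 'a list set) \<Rightarrow> 'a list set \<Rightarrow> 'a list set" where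
  "subst_set \<theta> S = (\<Union>u\<in>S. subst_word \<theta> u)"

fun subst_pow :: "('a \<Rightarrow> 'a list set) \<Rightarrow> nat \<Rightarrow> 'a list \<Rightarrow> 'a list set" where
  "subst_pow \<theta> 0 u = {u}"
| "subst_pow \<theta> (Suc m) u = subst_set \<theta> (subst_pow \<theta> m u)"

definition Phi :: "'a list \<Rightarrow> 'a \<Rightarrow> nat" where
  "Phi u = (\<lambda>b. count_list u b)"

definition semi_compatible :: "('a \<Rightarrow> 'a list set) \<Rightarrow> bool" where
  "semi_compatible \<theta> \<longleftrightarrow> (\<forall>a. \<forall>u\<in>\<theta> a. \<forall>v\<in>\<theta> a. Phi u = Phi v)"

definition subst_matrix :: "('a \<Rightarrow> 'a list set) \<Rightarrow> 'a \<Rightarrow> 'a \<Rightarrow> real" where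
  "subst_matrix \<theta> i j = real (count_list (SOME u. u \<in> \<theta> j) i)"

definition mat_mult :: "('a::finite \<Rightarrow> 'a \<Rightarrow> real) \<Rightarrow> ('a \<Rightarrow> 'a \<Rightarrow> real) \<Rightarrow> 'a \<Rightarrow> 'a \<Rightarrow> real" where
  "mat_mult A B i j = (\<Sum>k\<in>UNIV. A i k * B k j)"

fun mat_pow :: "('a::finite \<Rightarrow> 'a \<Rightarrow> real) \<Rightarrow> nat \<Rightarrow> 'a \<Rightarrow> 'a \<Rightarrow> real" where
  "mat_pow A 0 = (\<lambda>i j. if i = j then 1 else 0)"
| "mat_pow A (Suc k) = mat_mult (mat_pow A k) A"

definition primitive_matrix :: "('a::finite \<Rightarrow> 'a \<Rightarrow> real) \<Rightarrow> bool" where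
  "primitive_matrix A \<longleftrightarrow> (\<forall>i j. A i j \<ge> 0) \<and> (\<exists>k>0. \<forall>i j. mat_pow A k i j > 0)"

definition is_eigenvalue :: "('a::finite \<Rightarrow> 'a \<Rightarrow> real) \<Rightarrow> complex \<Rightarrow> bool" where
  "is_eigenvalue A \<mu> \<longleftrightarrow>
     (\<exists>v::'a \<Rightarrow> complex. v \<noteq> (\<lambda>_. 0) \<and> (\<forall>i. (\<Sum>j\<in>UNIV. complex_of_real (A i j) * v j) = \<mu> * v i))"

definition is_PF_eigenvalue :: "('a::finite \<Rightarrow> 'a \<Rightarrow> real) \<Rightarrow> real \<Rightarrow> bool" where
  "is_PF_eigenvalue A l \<longleftrightarrow> is_eigenvalue A (complex_of_real l) \<and> (\<forall>\<mu>. is_eigenvalue A \<mu> \<longrightarrow> cmod \<mu> \<le> l)"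

definition is_PF_right_eigenvector :: "('a::finite \<Rightarrow> 'a \<Rightarrow> real) \<Rightarrow> real \<Rightarrow> ('a \<Rightarrow> real) \<Rightarrow> bool" where
  "is_PF_right_eigenvector A l R \<longleftrightarrow>
     (\<forall>i. R i > 0) \<and> (\<Sum>i\<in>UNIV. \<bar>R i\<bar>) = 1 \<and> (\<forall>i. (\<Sum>j\<in>UNIV. A i j * R j) = l * R i)"

definition q1 :: "('a \<Rightarrow> 'a list set) \<Rightarrow> 'a \<Rightarrow> real" where
  "q1 \<theta> a = ln (real (card (\<theta> a)))"

definition language :: "('a \<Rightarrow> 'a list set) \<Rightarrow> 'a list set" where
  "language \<theta> = {w. \<exists>a m. \<exists>u\<in>subst_pow \<theta> m [a]. sublist w u}"

definition language_len :: "('a \<Rightarrow> 'a list set) \<Rightarrow> nat \<Rightarrow> 'a list set" where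
  "language_len \<theta> l = {w \<in> language \<theta>. length w = l}"

definition identical_set_condition :: "('a \<Rightarrow> 'a list set) \<Rightarrow> bool" where
  "identical_set_condition \<theta> \<longleftrightarrow>
     (\<forall>a m. m \<ge> 1 \<longrightarrow> (\<forall>u\<in>\<theta> a. \<forall>v\<in>\<theta> a. subst_pow \<theta> m u = subst_pow \<theta> m v))"

definition disjoint_set_condition :: "('a \<Rightarrow> 'a list set) \<Rightarrow> bool" where
  "disjoint_set_condition \<theta> \<longleftrightarrow>
     (\<forall>a m. m \<ge> 1 \<longrightarrow> (\<forall>u\<in>\<theta> a. \<forall>v\<in>\<theta> a. u \<noteq> v \<longrightarrow> subst_pow \<theta> m u \<inter> subst_pow \<theta> m v = {}))"

end

theory Submission
  imports Defs
begin

text \<open>Semi-compatibility makes all level-\<open>m\<close> inflation words of a letter \<open>b\<close> have the same letter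
  counts, namely column \<open>b\<close> of \<open>M\<^sup>m\<close>, hence a common length \<open>|\<theta>\<^sup>m(b)|\<close>. Counting them, the
  identical set condition gives \<open>ln #\<theta>\<^sup>m\<^sup>+\<^sup>1(b) = \<Sum>\<^sub>c M\<^sub>c\<^sub>b ln #\<theta>\<^sup>m(c)\<close>, and the disjoint set
  condition the same plus \<open>ln #\<theta>(b)\<close>; so \<open>ln #\<theta>\<^sup>m\<^sup>+\<^sup>1(b)\<close> is \<open>(q\<^sub>1\<^sup>T M\<^sup>m)\<^sub>b\<close>, resp.
  \<open>\<Sum>\<^sub>k\<^sub>\<le>\<^sub>m (q\<^sub>1\<^sup>T M\<^sup>k)\<^sub>b\<close>. By Perron--Frobenius, \<open>M\<^sup>m/\<lambda>\<^sup>m\<close> has columns converging to multiples of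
  \<open>R\<close>, so \<open>ln #\<theta>\<^sup>m(b) / |\<theta>\<^sup>m(b)|\<close> tends to \<open>q\<^sub>1\<^sup>T R / \<lambda>\<close>, resp. \<open>q\<^sub>1\<^sup>T R / (\<lambda> - 1)\<close>.

  The entropy of the language is the common limit of these ratios: every legal word of length
  \<open>\<ell>\<close> lies in a level-\<open>m\<close> inflation of a short word, up to at most \<open>2 max\<^sub>c |\<theta>\<^sup>m(c)|\<close> extra letters
  (upper bound), while the level-\<open>m\<close> inflations of one suitable legal word embed into \<open>\<L>\<^sub>\<ell>\<close>
  (lower bound). If \<open>\<lambda> = 1\<close>, every inflation word is a single letter and both sides vanish.\<close>

section \<open>Inflation words\<close>

definition conc :: "'a list set \<Rightarrow> 'a list set \<Rightarrow> 'a list set" where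
  "conc A B = {x @ y | x y. x \<in> A \<and> y \<in> B}"

lemma conc_assoc: "conc (conc A B) C = conc A (conc B C)"
  unfolding conc_def by auto (metis append_assoc)+

lemma conc_Nil [simp]: "conc {[]} A = A" "conc A {[]} = A"
  unfolding conc_def by auto

lemma conc_eq_image: "conc A B = (\<lambda>(x, y). x @ y) ` (A \<times> B)"
  unfolding conc_def by auto

lemma finite_conc: "finite A \<Longrightarrow> finite B \<Longrightarrow> finite (conc A B)"
  by (simp add: conc_eq_image)

lemma card_conc:
  assumes "finite A" "finite B" "\<And>x. x \<in> A \<Longrightarrow> length x = n"
  shows "card (conc A B) = card A * card B"
proof -
  have "inj_on (\<lambda>(x, y). x @ y) (A \<times> B)"
    using assms(3) by (auto simp: inj_on_def append_eq_append_conv)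
  then show ?thesis by (simp add: conc_eq_image card_image card_cartesian_product)
qed

lemma subst_word_Cons: "subst_word \<theta> (a # u) = conc (\<theta> a) (subst_word \<theta> u)"
  by (simp add: conc_def)

lemma subst_word_append: "subst_word \<theta> (u @ v) = conc (subst_word \<theta> u) (subst_word \<theta> v)"
  by (induction u) (simp_all add: conc_assoc subst_word_Cons del: subst_word.simps(2))

lemma subst_word_single [simp]: "subst_word \<theta> [a] = \<theta> a"
  by (simp add: subst_word_Cons del: subst_word.simps(2))

lemma subst_set_single [simp]: "subst_set \<theta> {u} = subst_word \<theta> u"
  by (simp add: subst_set_def)

lemma subst_set_conc: "subst_set \<theta> (conc A B) = conc (subst_set \<theta> A) (subst_set \<theta> B)"
proof
  show "subst_set \<theta> (conc A B) \<subseteq> conc (subst_set \<theta> A) (subst_set \<theta> B)"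
    unfolding subst_set_def conc_def by (auto simp: subst_word_append conc_def) blast
  show "conc (subst_set \<theta> A) (subst_set \<theta> B) \<subseteq> subst_set \<theta> (conc A B)"
    unfolding subst_set_def conc_def by (fastforce simp: subst_word_append conc_def)
qed

lemma subst_pow_append: "subst_pow \<theta> m (u @ v) = conc (subst_pow \<theta> m u) (subst_pow \<theta> m v)"
proof (induction m)
  case 0 then show ?case by (simp add: conc_def)
qed (simp add: subst_set_conc)

lemma subst_pow_Nil [simp]: "subst_pow \<theta> m [] = {[]}"
  by (induction m) auto

lemma subst_pow_add: "subst_pow \<theta> (m + k) u = (\<Union>v\<in>subst_pow \<theta> k u. subst_pow \<theta> m v)"
  by (induction m) (auto simp: subst_set_def)

lemma subst_pow_Suc': "subst_pow \<theta> (Suc m) u = (\<Union>v\<in>subst_word \<theta> u. subst_pow \<theta> m v)"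
  using subst_pow_add[of \<theta> m 1 u] by (simp add: subst_set_def)

lemma subst_pow_Suc_single: "subst_pow \<theta> (Suc m) [b] = (\<Union>u\<in>\<theta> b. subst_pow \<theta> m u)"
  using subst_pow_Suc'[of \<theta> m "[b]"] by simp

lemma subst_pow_mono: "v \<in> subst_pow \<theta> j u \<Longrightarrow> subst_pow \<theta> m v \<subseteq> subst_pow \<theta> (m + j) u"
  by (auto simp: subst_pow_add)

lemma append3_in_subst_pow:
  "x \<in> subst_pow \<theta> m u \<Longrightarrow> y \<in> subst_pow \<theta> m v \<Longrightarrow> z \<in> subst_pow \<theta> m w \<Longrightarrow>
    x @ y @ z \<in> subst_pow \<theta> m (u @ v @ w)"
  unfolding subst_pow_append conc_def by blast

lemma language_sublist: "w \<in> language \<theta> \<Longrightarrow> sublist v w \<Longrightarrow> v \<in> language \<theta>"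
  unfolding language_def using sublist_order.order_trans by blast

lemma subst_pow_single_in_language: "u \<in> subst_pow \<theta> m [a] \<Longrightarrow> u \<in> language \<theta>"
  unfolding language_def by blast

lemma finite_language_len: "finite (language_len \<theta> (l::nat) :: 'a::finite list set)"
proof -
  have "language_len \<theta> l \<subseteq> {xs. set xs \<subseteq> UNIV \<and> length xs = l}"
    unfolding language_len_def by auto
  then show ?thesis using finite_lists_length_eq[of "UNIV::'a set" l] finite_subset by auto
qed

lemma card_sublists_length_eq: "card {w. sublist w y \<and> length w = l} \<le> length y + 1"
proof -
  have "{w. sublist w y \<and> length w = l} \<subseteq> (\<lambda>i. take l (drop i y)) ` {..length y}"
  proof
    fix w assume "w \<in> {w. sublist w y \<and> length w = l}"
    then obtain ps ss where "y = ps @ w @ ss" "length w = l" unfolding sublist_def by blast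
    then show "w \<in> (\<lambda>i. take l (drop i y)) ` {..length y}" by (auto intro!: image_eqI[of _ _ "length ps"])
  qed
  then have "card {w. sublist w y \<and> length w = l} \<le> card ((\<lambda>i. take l (drop i y)) ` {..length y})"
    by (rule card_mono[rotated]) auto
  also have "\<dots> \<le> length y + 1" using card_image_le[of "{..length y}"] by simp
  finally show ?thesis .
qed

lemma sum_count_list_Cons_mult:
  fixes f :: "'a::finite \<Rightarrow> real"
  shows "(\<Sum>d\<in>UNIV. real (count_list (c # v) d) * f d) = f c + (\<Sum>d\<in>UNIV. real (count_list v d) * f d)"
proof -
  have eq: "(\<lambda>d. real (count_list (c # v) d) * f d)
      = (\<lambda>d. real (count_list v d) * f d + (if d = c then f c else 0))"
    by (auto simp: fun_eq_iff algebra_simps)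
  show ?thesis unfolding eq sum.distrib by simp
qed

lemma length_eq_sum_count_list: "real (length (y::'a::finite list)) = (\<Sum>d\<in>UNIV. real (count_list y d))"
  using sum_count_set[of y UNIV] by (simp flip: of_nat_sum)

section \<open>Limits of real sequences\<close>

lemma incseq_decseq_contraction_tendsto:
  fixes lo hi :: "nat \<Rightarrow> real"
  assumes inc: "incseq lo" and dec: "decseq hi" and le: "\<And>k. lo k \<le> hi k" and "\<delta> > 0"
    and gap: "\<And>k. lo k + \<delta> * (hi k - lo k) \<le> lo (p + k)"
  obtains c where "lo \<longlonglongrightarrow> c" "hi \<longlonglongrightarrow> c"
proof -
  obtain c1 where c1: "lo \<longlonglongrightarrow> c1"
    using incseq_convergent[OF inc, of "hi 0"] le dec by (metis decseqD order_trans zero_le)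
  obtain c2 where c2: "hi \<longlonglongrightarrow> c2"
    using decseq_convergent[OF dec, of "lo 0"] le inc by (metis incseqD order_trans zero_le)
  have "c1 \<le> c2" using c1 c2 le by (intro LIMSEQ_le) auto
  have "(\<lambda>k. lo k + \<delta> * (hi k - lo k)) \<longlonglongrightarrow> c1 + \<delta> * (c2 - c1)"
    by (intro tendsto_intros c1 c2)
  moreover have "(\<lambda>k. lo (k + p)) \<longlonglongrightarrow> c1" using LIMSEQ_ignore_initial_segment[OF c1] .
  ultimately have "c1 + \<delta> * (c2 - c1) \<le> c1"
    using gap by (intro LIMSEQ_le) (auto simp: add.commute)
  with \<open>\<delta> > 0\<close> \<open>c1 \<le> c2\<close> have "c2 = c1" by (smt (verit) mult_pos_pos)
  with c1 c2 show ?thesis using that by blast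
qed

lemma tendsto_geometric_weighted_average:
  fixes a :: "nat \<Rightarrow> real"
  assumes a: "a \<longlonglongrightarrow> A" and lam: "lam > 1"
  shows "(\<lambda>m. (\<Sum>k<m. a k * lam ^ k) / lam ^ m) \<longlonglongrightarrow> A / (lam - 1)"
proof -
  define L where "L = A / (lam - 1)"
  define b where "b m = (\<Sum>k<m. a k * lam ^ k) / lam ^ m" for m
  define e where "e m = \<bar>b m - L\<bar>" for m
  have e_Suc: "e (Suc m) \<le> (e m + \<bar>a m - A\<bar>) / lam" for m
  proof -
    have "b (Suc m) - L = ((b m - L) + (a m - A)) / lam"
      using lam by (simp add: b_def L_def field_simps)
    then show ?thesis
      unfolding e_def using lam by (simp add: divide_right_mono abs_triangle_ineq)
  qed
  show ?thesis unfolding b_def[symmetric] L_def[symmetric]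
  proof (rule LIMSEQ_I)
    fix r :: real assume "r > 0"
    define \<epsilon> where "\<epsilon> = r / 2"
    have "\<epsilon> > 0" using \<open>r > 0\<close> by (simp add: \<epsilon>_def)
    obtain N where N: "\<And>n. n \<ge> N \<Longrightarrow> \<bar>a n - A\<bar> < \<epsilon> * (lam - 1)"
      using LIMSEQ_D[OF a, of "\<epsilon> * (lam - 1)"] \<open>\<epsilon> > 0\<close> lam by auto
    have e_bound: "e (N + n) \<le> \<epsilon> + e N / lam ^ n" for n
    proof (induction n)
      case 0 then show ?case using \<open>\<epsilon> > 0\<close> by simp
    next
      case (Suc n)
      have "e (N + Suc n) \<le> (e (N + n) + \<bar>a (N + n) - A\<bar>) / lam" using e_Suc[of "N + n"] by simp
      also have "\<dots> \<le> (\<epsilon> + e N / lam ^ n + \<epsilon> * (lam - 1)) / lam"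
        using Suc N[of "N + n"] lam by (intro divide_right_mono) auto
      also have "\<dots> = \<epsilon> + e N / lam ^ Suc n" using lam by (simp add: field_simps)
      finally show ?case .
    qed
    have "(\<lambda>n. e N * inverse (lam ^ n)) \<longlonglongrightarrow> e N * 0"
      by (intro tendsto_intros LIMSEQ_inverse_realpow_zero lam)
    then obtain N2 where N2: "\<And>n. n \<ge> N2 \<Longrightarrow> e N / lam ^ n < \<epsilon>"
      using LIMSEQ_D[OF _ \<open>\<epsilon> > 0\<close>] by (fastforce simp: divide_inverse)
    have "norm (b n - L) < r" if "n \<ge> N + N2" for n
    proof -
      have "e n \<le> \<epsilon> + e N / lam ^ (n - N)" using e_bound[of "n - N"] that by simp
      moreover have "e N / lam ^ (n - N) < \<epsilon>" using N2 that by simp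
      ultimately have "e n < \<epsilon> + \<epsilon>" by linarith
      then have "e n < r" by (simp add: \<epsilon>_def)
      then show ?thesis by (simp add: e_def)
    qed
    then show "\<exists>no. \<forall>n\<ge>no. norm (b n - L) < r" by blast
  qed
qed

lemma tendsto_ln_add_const_over: "(\<lambda>l. ln (real l + C) / real l) \<longlonglongrightarrow> 0"
proof -
  have top: "filterlim (\<lambda>l. C + real l) at_top sequentially"
    by (rule filterlim_tendsto_add_at_top[OF tendsto_const filterlim_real_sequentially])
  have "(\<lambda>l. ln (C + real l) / (C + real l) * (1 + C / real l)) \<longlonglongrightarrow> 0 * (1 + 0)"
    using filterlim_compose[OF ln_x_over_x_tendsto_0 top] by (intro tendsto_intros)
  moreover have "\<forall>\<^sub>F l in sequentially.
      ln (C + real l) / (C + real l) * (1 + C / real l) = ln (real l + C) / real l"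
    using eventually_conj[OF eventually_gt_at_top[of 0]
        filterlim_at_top_dense[THEN iffD1, OF top, rule_format, of 0]]
  proof eventually_elim
    case (elim l)
    then have "ln (C + real l) / (C + real l) * (1 + C / real l)
        = ln (C + real l) / (C + real l) * ((C + real l) / real l)"
      by (simp add: field_simps)
    also have "\<dots> = ln (C + real l) / real l" using elim by simp
    finally show ?case by (simp add: add.commute)
  qed
  ultimately show ?thesis by (auto intro: Lim_transform_eventually)
qed

section \<open>Nonnegative matrices\<close>

definition mvec :: "('a::finite \<Rightarrow> 'a \<Rightarrow> real) \<Rightarrow> ('a \<Rightarrow> real) \<Rightarrow> 'a \<Rightarrow> real" where
  "mvec A x i = (\<Sum>j\<in>UNIV. A i j * x j)"

lemma mat_mult_assoc: "mat_mult (mat_mult A B) C = mat_mult A (mat_mult B C)"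
  unfolding mat_mult_def
  by (auto simp: fun_eq_iff sum_distrib_left sum_distrib_right mult.assoc intro: sum.swap)

lemma sum_delta_mult [simp]:
  fixes f :: "'a::finite \<Rightarrow> real"
  shows "(\<Sum>k\<in>(UNIV::'a::finite set). (if i = k then 1 else 0) * f k) = f i"
  "(\<Sum>k\<in>(UNIV::'a::finite set). f k * (if k = j then 1 else 0)) = f j"
proof -
  have "(\<Sum>k\<in>(UNIV::'a set). (if i = k then 1 else 0) * f k) = (\<Sum>k\<in>UNIV. if k = i then f i else 0)"
    by (intro sum.cong) auto
  then show "(\<Sum>k\<in>(UNIV::'a set). (if i = k then 1 else 0) * f k) = f i" by simp
  have "(\<Sum>k\<in>(UNIV::'a set). f k * (if k = j then 1 else 0)) = (\<Sum>k\<in>UNIV. if k = j then f j else 0)"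
    by (intro sum.cong) auto
  then show "(\<Sum>k\<in>(UNIV::'a set). f k * (if k = j then 1 else 0)) = f j" by simp
qed

lemma mat_mult_id:
  "mat_mult (\<lambda>i j. if i = j then 1 else 0) B = B" "mat_mult B (\<lambda>i j. if i = j then 1 else 0) = B"
  by (simp_all add: mat_mult_def fun_eq_iff)

lemma mat_pow_add: "mat_pow A (m + k) = mat_mult (mat_pow A m) (mat_pow A k)"
  by (induction k) (simp_all add: mat_mult_id mat_mult_assoc)

lemma mat_pow_1 [simp]: "mat_pow A 1 = A"
  using mat_mult_id(1)[of A] by simp

lemma mat_pow_nonneg: "(\<And>i j. A i j \<ge> 0) \<Longrightarrow> mat_pow A k i j \<ge> 0"
  by (induction k arbitrary: i j) (auto simp: mat_mult_def intro!: sum_nonneg)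

lemma mat_pow_scale: "mat_pow (\<lambda>i j. c * A i j) k i j = c ^ k * mat_pow A k i j"
  by (induction k arbitrary: i j) (simp_all add: mat_mult_def sum_distrib_left mult_ac)

lemma mvec_mat_mult: "mvec (mat_mult A B) x = mvec A (mvec B x)"
  unfolding mvec_def mat_mult_def
  by (auto simp: fun_eq_iff sum_distrib_left sum_distrib_right mult.assoc intro: sum.swap)

lemma mvec_mono: "(\<And>i j. A i j \<ge> 0) \<Longrightarrow> (\<And>j. x j \<le> y j) \<Longrightarrow> mvec A x i \<le> mvec A y i"
  unfolding mvec_def by (intro sum_mono mult_left_mono) auto

lemma mvec_scale: "mvec A (\<lambda>j. c * x j) i = c * mvec A x i"
  unfolding mvec_def by (simp add: sum_distrib_left algebra_simps)

lemma mvec_diff: "mvec A (\<lambda>j. x j - y j) i = mvec A x i - mvec A y i"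
  unfolding mvec_def by (simp add: sum_subtractf algebra_simps)

lemma mvec_ge_term:
  assumes "\<And>i j. A i j \<ge> 0" "\<And>j. x j \<ge> 0"
  shows "A i j * x j \<le> mvec A x i"
  unfolding mvec_def by (rule member_le_sum) (auto intro: assms mult_nonneg_nonneg)

lemma mvec_pow_fixed:
  assumes "mvec A R = R" shows "mvec (mat_pow A k) R = R"
proof (induction k)
  case 0 then show ?case by (simp add: mvec_def fun_eq_iff)
qed (simp add: mvec_mat_mult assms)

lemma mvec_pow_ge_fixed:
  assumes "\<And>i j. A i j \<ge> 0" "mvec A R = R" "\<And>j. a * R j \<le> y j"
  shows "a * R d \<le> mvec (mat_pow A k) y d"
proof -
  have "mvec (mat_pow A k) (\<lambda>j. a * R j) d \<le> mvec (mat_pow A k) y d"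
    by (rule mvec_mono[OF mat_pow_nonneg[OF assms(1)] assms(3)])
  then show ?thesis by (simp add: mvec_scale mvec_pow_fixed[OF assms(2)])
qed

lemma mvec_pow_le_fixed:
  assumes "\<And>i j. A i j \<ge> 0" "mvec A R = R" "\<And>j. y j \<le> b * R j"
  shows "mvec (mat_pow A k) y d \<le> b * R d"
proof -
  have "mvec (mat_pow A k) y d \<le> mvec (mat_pow A k) (\<lambda>j. b * R j) d"
    by (rule mvec_mono[OF mat_pow_nonneg[OF assms(1)] assms(3)])
  then show ?thesis by (simp add: mvec_scale mvec_pow_fixed[OF assms(2)])
qed

lemma mvec_pow_ge_fixed_gap:
  assumes "\<And>i j. A i j \<ge> 0" "mvec A R = R" "\<And>j. a * R j \<le> y j"
    and "R j > 0" "\<delta> * R d \<le> mat_pow A k d j * R j"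
  shows "(a + \<delta> * (y j / R j - a)) * R d \<le> mvec (mat_pow A k) y d"
proof -
  define z where "z i = y i - a * R i" for i
  have z: "z i \<ge> 0" for i using assms(3)[of i] by (simp add: z_def)
  have "\<delta> * (y j / R j - a) * R d = \<delta> * R d * (z j / R j)"
    using \<open>R j > 0\<close> by (simp add: z_def field_simps)
  also have "\<dots> \<le> mat_pow A k d j * R j * (z j / R j)"
    using assms(5) z \<open>R j > 0\<close> by (intro mult_right_mono) auto
  also have "\<dots> = mat_pow A k d j * z j" using \<open>R j > 0\<close> by simp
  also have "\<dots> \<le> mvec (mat_pow A k) z d" by (rule mvec_ge_term[OF mat_pow_nonneg[OF assms(1)] z])
  also have "\<dots> = mvec (mat_pow A k) y d - mvec (mat_pow A k) (\<lambda>i. a * R i) d"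
    unfolding z_def by (rule mvec_diff)
  also have "\<dots> = mvec (mat_pow A k) y d - a * R d"
    by (simp add: mvec_scale mvec_pow_fixed[OF assms(2)])
  finally show ?thesis by (simp add: algebra_simps)
qed

definition min_ratio :: "('a::finite \<Rightarrow> real) \<Rightarrow> ('a \<Rightarrow> real) \<Rightarrow> real" where
  "min_ratio R y = Min (range (\<lambda>d. y d / R d))"

definition max_ratio :: "('a::finite \<Rightarrow> real) \<Rightarrow> ('a \<Rightarrow> real) \<Rightarrow> real" where
  "max_ratio R y = Max (range (\<lambda>d. y d / R d))"

lemma min_ratio_le: "min_ratio R y \<le> y d / R d"
  and le_max_ratio: "y d / R d \<le> max_ratio R y"
  unfolding min_ratio_def max_ratio_def by auto

lemma min_ratio_mult_le: "R d > 0 \<Longrightarrow> min_ratio R y * R d \<le> y d"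
  and le_max_ratio_mult: "R d > 0 \<Longrightarrow> y d \<le> max_ratio R y * R d"
  using min_ratio_le[of R y d] le_max_ratio[of y d R] by (simp_all add: field_simps)

lemma min_ratio_mvec_pow:
  assumes "\<And>i j. A i j \<ge> 0" "\<And>i. R i > 0" "mvec A R = R"
  shows "min_ratio R y \<le> min_ratio R (mvec (mat_pow A k) y)"
proof -
  have "min_ratio R y * R d \<le> mvec (mat_pow A k) y d" for d
    by (rule mvec_pow_ge_fixed[OF assms(1,3) min_ratio_mult_le[OF assms(2)]])
  then show ?thesis
    unfolding min_ratio_def[of _ "mvec _ _"] using assms(2) by (auto simp: Min_ge_iff field_simps)
qed

lemma max_ratio_mvec_pow:
  assumes "\<And>i j. A i j \<ge> 0" "\<And>i. R i > 0" "mvec A R = R"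
  shows "max_ratio R (mvec (mat_pow A k) y) \<le> max_ratio R y"
proof -
  have "mvec (mat_pow A k) y d \<le> max_ratio R y * R d" for d
    by (rule mvec_pow_le_fixed[OF assms(1,3) le_max_ratio_mult[OF assms(2)]])
  then show ?thesis
    unfolding max_ratio_def[of _ "mvec _ _"] using assms(2) by (auto simp: Max_le_iff field_simps)
qed

lemma min_ratio_mvec_pow_gap:
  assumes "\<And>i j. A i j \<ge> 0" "\<And>i. R i > 0" "mvec A R = R"
    and "\<And>d j. \<delta> * R d \<le> mat_pow A k d j * R j"
  shows "min_ratio R y + \<delta> * (max_ratio R y - min_ratio R y) \<le> min_ratio R (mvec (mat_pow A k) y)"
proof -
  have "max_ratio R y \<in> range (\<lambda>d. y d / R d)" unfolding max_ratio_def by (rule Max_in) auto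
  then obtain j where j: "y j / R j = max_ratio R y" by auto
  have "(min_ratio R y + \<delta> * (y j / R j - min_ratio R y)) * R d \<le> mvec (mat_pow A k) y d" for d
    by (rule mvec_pow_ge_fixed_gap[OF assms(1,3) min_ratio_mult_le[OF assms(2)] assms(2,4)])
  then have "min_ratio R y + \<delta> * (max_ratio R y - min_ratio R y) \<le> mvec (mat_pow A k) y d / R d" for d
    unfolding j using assms(2)[of d] by (simp add: pos_le_divide_eq)
  then show ?thesis unfolding min_ratio_def[of _ "mvec _ _"] by (auto simp: Min_ge_iff)
qed

text \<open>Perron--Frobenius: \<open>min_ratio R (A\<^sup>k x)\<close> increases, \<open>max_ratio R (A\<^sup>k x)\<close> decreases, and the
  positive power \<open>A\<^sup>p\<close> shrinks the gap between them by a fixed factor.\<close>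

lemma mvec_pow_tendsto_fixed_vector:
  fixes A :: "'a::finite \<Rightarrow> 'a \<Rightarrow> real"
  assumes nonneg: "\<And>i j. A i j \<ge> 0" and pos: "\<And>i j. mat_pow A p i j > 0"
    and R: "\<And>i. R i > 0" and fixed: "mvec A R = R"
    and x: "\<And>j. x j \<ge> 0" "x a > 0"
  obtains c where "c > 0" "\<And>d. (\<lambda>k. mvec (mat_pow A k) x d) \<longlonglongrightarrow> c * R d"
proof -
  define V where "V k = mvec (mat_pow A k) x" for k
  define lo where "lo k = min_ratio R (V k)" for k
  define hi where "hi k = max_ratio R (V k)" for k
  have V_add: "V (q + k) = mvec (mat_pow A q) (V k)" for q k
    unfolding V_def by (simp add: mat_pow_add mvec_mat_mult)
  have "lo k \<le> lo (1 + k)" and "hi (1 + k) \<le> hi k" for k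
    unfolding lo_def hi_def V_add
    by (rule min_ratio_mvec_pow[OF nonneg R fixed] max_ratio_mvec_pow[OF nonneg R fixed])+
  then have "incseq lo" "decseq hi" by (auto intro: incseq_SucI decseq_SucI)
  have lo_le: "lo k \<le> V k d / R d" and le_hi: "V k d / R d \<le> hi k" for k d
    unfolding lo_def hi_def by (rule min_ratio_le le_max_ratio)+
  define \<delta> where "\<delta> = Min (range (\<lambda>(d, j). mat_pow A p d j * R j / R d))"
  have "\<delta> > 0"
    using pos R unfolding \<delta>_def by (subst Min_gr_iff) auto
  have \<delta>: "\<delta> * R d \<le> mat_pow A p d j * R j" for d j
  proof -
    have "\<delta> \<le> mat_pow A p d j * R j / R d" unfolding \<delta>_def by (rule Min_le) auto
    then show ?thesis using R[of d] by (simp add: field_simps)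
  qed
  have gap: "lo k + \<delta> * (hi k - lo k) \<le> lo (p + k)" for k
    unfolding lo_def hi_def V_add by (rule min_ratio_mvec_pow_gap[OF nonneg R fixed \<delta>])
  obtain c where lo_lim: "lo \<longlonglongrightarrow> c" and hi_lim: "hi \<longlonglongrightarrow> c"
    using order_trans[OF lo_le le_hi]
    by (rule incseq_decseq_contraction_tendsto[OF \<open>incseq lo\<close> \<open>decseq hi\<close> _ \<open>\<delta> > 0\<close> gap])
  have "lo p > 0"
  proof -
    have "0 < mat_pow A p d a * x a" for d using pos x(2) by simp
    also have "mat_pow A p d a * x a \<le> V p d" for d
      unfolding V_def by (rule mvec_ge_term[OF mat_pow_nonneg[OF nonneg] x(1)])
    finally show ?thesis using R unfolding lo_def min_ratio_def by (subst Min_gr_iff) auto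
  qed
  then have "c > 0" using incseq_le[OF \<open>incseq lo\<close> lo_lim, of p] by simp
  moreover have "(\<lambda>k. mvec (mat_pow A k) x d) \<longlonglongrightarrow> c * R d" for d
  proof -
    have "(\<lambda>k. V k d / R d) \<longlonglongrightarrow> c"
      by (rule tendsto_sandwich[OF _ _ lo_lim hi_lim]) (use lo_le le_hi in auto)
    then have "(\<lambda>k. V k d / R d * R d) \<longlonglongrightarrow> c * R d" by (intro tendsto_intros)
    then show ?thesis using R[of d] by (simp add: V_def)
  qed
  ultimately show ?thesis using that by blast
qed

section \<open>Semi-compatible random substitutions\<close>

locale random_subst =
  fixes \<theta> :: "'a \<Rightarrow> 'a list set"
  assumes random_subst: "is_random_subst \<theta>"
begin

lemma finite_subst_word: "finite (subst_word \<theta> u)"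
  using random_subst
  by (induction u) (auto simp: is_random_subst_def subst_word_Cons finite_conc simp del: subst_word.simps(2))

lemma subst_word_nonempty: "subst_word \<theta> u \<noteq> {}"
  using random_subst
  by (induction u) (auto simp: is_random_subst_def subst_word_Cons conc_def simp del: subst_word.simps(2))

lemma finite_subst_pow: "finite (subst_pow \<theta> m u)"
  and subst_pow_nonempty: "subst_pow \<theta> m u \<noteq> {}"
  by (induction m arbitrary: u)
    (auto simp: subst_pow_Suc' finite_subst_word subst_word_nonempty simp del: subst_pow.simps(2))

lemma card_subst_pow_pos: "card (subst_pow \<theta> m u) > 0"
  using finite_subst_pow subst_pow_nonempty by (simp add: card_gt_0_iff)

lemma some_in_subst_pow: "(SOME y. y \<in> subst_pow \<theta> m u) \<in> subst_pow \<theta> m u"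
  using subst_pow_nonempty by (simp add: some_in_eq)

lemma subst_pow_not_Nil: "y \<in> subst_pow \<theta> m u \<Longrightarrow> u \<noteq> [] \<Longrightarrow> y \<noteq> []"
proof (induction m arbitrary: u)
  case (Suc m)
  then obtain v where v: "v \<in> subst_word \<theta> u" "y \<in> subst_pow \<theta> m v"
    unfolding subst_pow_Suc' by auto
  obtain a u' where "u = a # u'" using Suc.prems(2) by (cases u) auto
  with v(1) obtain w v' where "v = w @ v'" "w \<in> \<theta> a" by auto
  then have "v \<noteq> []" using random_subst unfolding is_random_subst_def by auto
  then show ?case using Suc.IH v(2) by blast
qed simp

lemma language_subst_pow:
  assumes "v \<in> language \<theta>" "y \<in> subst_pow \<theta> m v"
  shows "y \<in> language \<theta>"
proof -
  obtain a j u where u: "u \<in> subst_pow \<theta> j [a]" "sublist v u"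
    using assms(1) unfolding language_def by blast
  then obtain ps ss where u_eq: "u = ps @ v @ ss" unfolding sublist_def by blast
  define p where "p = (SOME x. x \<in> subst_pow \<theta> m ps)"
  define s where "s = (SOME x. x \<in> subst_pow \<theta> m ss)"
  have "p @ y @ s \<in> subst_pow \<theta> m u"
    unfolding u_eq p_def s_def by (rule append3_in_subst_pow[OF some_in_subst_pow assms(2) some_in_subst_pow])
  then have "p @ y @ s \<in> subst_pow \<theta> (m + j) [a]" using subst_pow_mono[OF u(1)] by blast
  then have "p @ y @ s \<in> language \<theta>" by (rule subst_pow_single_in_language)
  then show ?thesis by (rule language_sublist) simp
qed

lemma sublist_subst_pow_add_period:
  assumes "z \<in> subst_pow \<theta> p [a]" "a \<in> set z" "u \<in> subst_pow \<theta> j [a]"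
  shows "\<exists>u'\<in>subst_pow \<theta> (j + p) [a]. sublist u u'"
proof -
  obtain z1 z2 where z: "z = z1 @ a # z2" using split_list[OF assms(2)] by blast
  define e1 where "e1 = (SOME x. x \<in> subst_pow \<theta> j z1)"
  define e2 where "e2 = (SOME x. x \<in> subst_pow \<theta> j z2)"
  have "e1 @ u @ e2 \<in> subst_pow \<theta> j (z1 @ [a] @ z2)"
    unfolding e1_def e2_def by (rule append3_in_subst_pow[OF some_in_subst_pow assms(3) some_in_subst_pow])
  then have "e1 @ u @ e2 \<in> subst_pow \<theta> (j + p) [a]" using subst_pow_mono[OF assms(1)] z by auto
  then show ?thesis by blast
qed

end

locale semi_compatible_subst = random_subst \<theta> for \<theta> :: "'a::finite \<Rightarrow> 'a list set" +
  assumes semi_compatible: "semi_compatible \<theta>"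
begin

abbreviation M :: "'a \<Rightarrow> 'a \<Rightarrow> real" where "M \<equiv> subst_matrix \<theta>"

lemma subst_matrix_nonneg: "M i j \<ge> 0"
  unfolding subst_matrix_def by simp

lemma count_list_in_subst: "u \<in> \<theta> a \<Longrightarrow> real (count_list u i) = M i a"
proof -
  assume u: "u \<in> \<theta> a"
  have "(SOME y. y \<in> \<theta> a) \<in> \<theta> a"
    using random_subst unfolding is_random_subst_def by (simp add: some_in_eq)
  with u have "Phi u = Phi (SOME y. y \<in> \<theta> a)"
    using semi_compatible unfolding semi_compatible_def by blast
  then show ?thesis unfolding subst_matrix_def Phi_def by metis
qed

lemma count_list_subst_word:
  "x \<in> subst_word \<theta> u \<Longrightarrow> real (count_list x i) = mvec M (\<lambda>j. real (count_list u j)) i"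
proof (induction u arbitrary: x)
  case Nil then show ?case by (simp add: mvec_def)
next
  case (Cons a u)
  then obtain w v where x: "x = w @ v" "w \<in> \<theta> a" "v \<in> subst_word \<theta> u" by auto
  have "mvec M (\<lambda>j. real (count_list (a # u) j)) i = M i a + mvec M (\<lambda>j. real (count_list u j)) i"
    using sum_count_list_Cons_mult[of a u "M i"] by (simp add: mvec_def mult.commute)
  then show ?case using Cons.IH[OF x(3)] count_list_in_subst[OF x(2)] x(1) by simp
qed

lemma count_list_subst_pow:
  "x \<in> subst_pow \<theta> m u \<Longrightarrow> real (count_list x i) = mvec (mat_pow M m) (\<lambda>j. real (count_list u j)) i"
proof (induction m arbitrary: x i u)
  case 0 then show ?case by (simp add: mvec_def)
next
  case (Suc m)
  then obtain v where v: "v \<in> subst_word \<theta> u" "x \<in> subst_pow \<theta> m v"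
    unfolding subst_pow_Suc' by auto
  have "(\<lambda>j. real (count_list v j)) = mvec M (\<lambda>j. real (count_list u j))"
    using count_list_subst_word[OF v(1)] by auto
  with Suc.IH[OF v(2)] show ?case by (simp add: mvec_mat_mult)
qed

lemma count_list_subst_pow_single:
  "y \<in> subst_pow \<theta> m [b] \<Longrightarrow> real (count_list y d) = mat_pow M m d b"
proof -
  have "(\<lambda>j. real (count_list [b] j)) = (\<lambda>j. if j = b then 1 else 0)" by auto
  then show "y \<in> subst_pow \<theta> m [b] \<Longrightarrow> ?thesis" by (simp add: count_list_subst_pow mvec_def)
qed

text \<open>Well defined, since all level-\<open>m\<close> inflation words of \<open>b\<close> have the same length
  (lemma \<open>length_subst_pow_single\<close> below).\<close>

definition infl_len :: "nat \<Rightarrow> 'a \<Rightarrow> nat" where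
  "infl_len m b = length (SOME y. y \<in> subst_pow \<theta> m [b])"

definition infl_card :: "nat \<Rightarrow> 'a \<Rightarrow> nat" where
  "infl_card m b = card (subst_pow \<theta> m [b])"

abbreviation infl_entropy :: "nat \<Rightarrow> 'a \<Rightarrow> real" where
  "infl_entropy m b \<equiv> ln (real (infl_card m b)) / real (infl_len m b)"

lemma infl_len_eq_col_sum: "real (infl_len m b) = (\<Sum>d\<in>UNIV. mat_pow M m d b)"
  unfolding infl_len_def length_eq_sum_count_list
  using count_list_subst_pow_single[OF some_in_subst_pow] by simp

lemma length_subst_pow_single: "y \<in> subst_pow \<theta> m [b] \<Longrightarrow> length y = infl_len m b"
  using infl_len_eq_col_sum count_list_subst_pow_single length_eq_sum_count_list[of y]
  by (metis (no_types, lifting) of_nat_eq_iff sum.cong)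

lemma infl_len_pos: "infl_len m b > 0"
  using subst_pow_not_Nil[OF some_in_subst_pow] unfolding infl_len_def by simp

lemma subst_matrix_col_sum_ge_1: "(\<Sum>i\<in>UNIV. M i j) \<ge> 1"
proof -
  have "real (infl_len 1 j) = (\<Sum>i\<in>UNIV. M i j)"
    using infl_len_eq_col_sum[of 1 j] by (simp only: mat_pow_1)
  then show ?thesis using infl_len_pos[of 1 j] by linarith
qed

lemma ln_card_subst_pow:
  "ln (real (card (subst_pow \<theta> m v))) = (\<Sum>c\<in>UNIV. real (count_list v c) * ln (real (infl_card m c)))"
proof (induction v)
  case (Cons c v)
  have "subst_pow \<theta> m (c # v) = conc (subst_pow \<theta> m [c]) (subst_pow \<theta> m v)"
    using subst_pow_append[of \<theta> m "[c]" v] by simp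
  then have "card (subst_pow \<theta> m (c # v)) = infl_card m c * card (subst_pow \<theta> m v)"
    unfolding infl_card_def
    by (simp add: card_conc[OF finite_subst_pow finite_subst_pow length_subst_pow_single])
  then have "ln (real (card (subst_pow \<theta> m (c # v))))
      = ln (real (infl_card m c)) + ln (real (card (subst_pow \<theta> m v)))"
    using card_subst_pow_pos[of m "[c]"] card_subst_pow_pos[of m v] by (simp add: infl_card_def ln_mult)
  then show ?case using Cons.IH unfolding sum_count_list_Cons_mult by simp
qed simp

lemma ln_card_subst_pow_of_subst:
  "u \<in> \<theta> b \<Longrightarrow> ln (real (card (subst_pow \<theta> m u))) = (\<Sum>c\<in>UNIV. M c b * ln (real (infl_card m c)))"
  using ln_card_subst_pow count_list_in_subst by simp

lemma ln_infl_card_Suc_identical: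
  assumes "identical_set_condition \<theta>" "m \<ge> 1"
  shows "ln (real (infl_card (Suc m) b)) = (\<Sum>c\<in>UNIV. M c b * ln (real (infl_card m c)))"
proof -
  obtain u0 where u0: "u0 \<in> \<theta> b" using random_subst unfolding is_random_subst_def by blast
  have "(\<Union>u\<in>\<theta> b. subst_pow \<theta> m u) = subst_pow \<theta> m u0"
    using assms u0 unfolding identical_set_condition_def by blast
  then have "infl_card (Suc m) b = card (subst_pow \<theta> m u0)"
    unfolding infl_card_def subst_pow_Suc_single by simp
  then show ?thesis using ln_card_subst_pow_of_subst[OF u0] by simp
qed

lemma ln_infl_card_Suc_disjoint:
  assumes dsc: "disjoint_set_condition \<theta>"
  shows "ln (real (infl_card (Suc m) b)) = q1 \<theta> b + (\<Sum>c\<in>UNIV. M c b * ln (real (infl_card m c)))"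
proof -
  define K where "K = (\<Sum>c\<in>UNIV. M c b * ln (real (infl_card m c)))"
  have fin: "finite (\<theta> b)" and "card (\<theta> b) > 0"
    using random_subst unfolding is_random_subst_def by (auto simp: card_gt_0_iff)
  have "subst_pow \<theta> m u \<inter> subst_pow \<theta> m v = {}" if "u \<in> \<theta> b" "v \<in> \<theta> b" "u \<noteq> v" for u v
    using dsc that unfolding disjoint_set_condition_def by (cases "m = 0") auto
  then have "infl_card (Suc m) b = (\<Sum>u\<in>\<theta> b. card (subst_pow \<theta> m u))"
    unfolding infl_card_def subst_pow_Suc_single
    by (intro card_UN_disjoint[OF fin]) (auto simp: finite_subst_pow)
  also have "real (card (subst_pow \<theta> m u)) = exp K" if "u \<in> \<theta> b" for u
    using ln_card_subst_pow_of_subst[OF that] card_subst_pow_pos[of m u] K_def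
    by (metis exp_ln of_nat_0_less_iff)
  then have "real (\<Sum>u\<in>\<theta> b. card (subst_pow \<theta> m u)) = real (card (\<theta> b)) * exp K"
    by (simp add: of_nat_sum)
  finally show ?thesis
    using \<open>card (\<theta> b) > 0\<close> unfolding K_def q1_def by (simp add: ln_mult)
qed

definition q1_mat_pow :: "nat \<Rightarrow> 'a \<Rightarrow> real" where
  "q1_mat_pow k b = (\<Sum>d\<in>UNIV. q1 \<theta> d * mat_pow M k d b)"

lemma q1_mat_pow_0: "q1_mat_pow 0 b = q1 \<theta> b"
  unfolding q1_mat_pow_def by (simp add: if_distrib cong: if_cong)

lemma q1_mat_pow_Suc: "q1_mat_pow (Suc k) b = (\<Sum>c\<in>UNIV. M c b * q1_mat_pow k c)"
  unfolding q1_mat_pow_def mat_pow.simps mat_mult_def sum_distrib_left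
  by (subst sum.swap) (simp add: sum_distrib_left mult_ac)

lemma ln_infl_card_identical:
  assumes "identical_set_condition \<theta>"
  shows "ln (real (infl_card (Suc k) b)) = q1_mat_pow k b"
proof (induction k arbitrary: b)
  case 0 then show ?case by (simp add: infl_card_def q1_def q1_mat_pow_0)
next
  case (Suc k) then show ?case
    using ln_infl_card_Suc_identical[OF assms, of "Suc k" b] by (simp add: q1_mat_pow_Suc)
qed

lemma ln_infl_card_disjoint:
  assumes "disjoint_set_condition \<theta>"
  shows "ln (real (infl_card m b)) = (\<Sum>k<m. q1_mat_pow k b)"
proof (induction m arbitrary: b)
  case 0 then show ?case by (simp add: infl_card_def)
next
  case (Suc m)
  have "(\<Sum>k<Suc m. q1_mat_pow k b) = q1_mat_pow 0 b + (\<Sum>k<m. q1_mat_pow (Suc k) b)"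
    by (rule sum.lessThan_Suc_shift)
  also have "(\<Sum>k<m. q1_mat_pow (Suc k) b) = (\<Sum>c\<in>UNIV. M c b * (\<Sum>k<m. q1_mat_pow k c))"
    unfolding q1_mat_pow_Suc sum_distrib_left by (rule sum.swap)
  finally show ?case using ln_infl_card_Suc_disjoint[OF assms, of m b] Suc by (simp add: q1_mat_pow_0)
qed

definition infl_len_word :: "nat \<Rightarrow> 'a list \<Rightarrow> nat" where
  "infl_len_word m v = sum_list (map (infl_len m) v)"

definition max_infl_len :: "nat \<Rightarrow> nat" where
  "max_infl_len m = Max (range (infl_len m))"

definition min_infl_len :: "nat \<Rightarrow> nat" where
  "min_infl_len m = Min (range (infl_len m))"

lemma infl_len_le_max: "infl_len m c \<le> max_infl_len m"
  unfolding max_infl_len_def by simp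

lemma min_le_infl_len: "min_infl_len m \<le> infl_len m c"
  unfolding min_infl_len_def by simp

lemma min_infl_len_pos: "min_infl_len m > 0"
proof -
  have "min_infl_len m \<in> range (infl_len m)" unfolding min_infl_len_def by (intro Min_in) auto
  then show ?thesis using infl_len_pos by auto
qed

lemma length_subst_pow: "y \<in> subst_pow \<theta> m v \<Longrightarrow> length y = infl_len_word m v"
proof (induction v arbitrary: y)
  case (Cons c v)
  then obtain y1 y2 where "y = y1 @ y2" "y1 \<in> subst_pow \<theta> m [c]" "y2 \<in> subst_pow \<theta> m v"
    using subst_pow_append[of \<theta> m "[c]" v] by (auto simp: conc_def)
  then show ?case using Cons.IH length_subst_pow_single by (simp add: infl_len_word_def)
qed (simp add: infl_len_word_def)

lemma infl_len_word_eq_count: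
  "real (infl_len_word m v) = (\<Sum>c\<in>UNIV. real (count_list v c) * real (infl_len m c))"
  unfolding infl_len_word_def
  using sum_list_map_eq_sum_count2[of v UNIV "infl_len m"] by (simp add: of_nat_sum)

lemma length_mult_min_infl_len_le: "length v * min_infl_len m \<le> infl_len_word m v"
proof -
  have "length v * min_infl_len m = sum_list (map (\<lambda>_. min_infl_len m) v)" by (induction v) auto
  also have "\<dots> \<le> infl_len_word m v" unfolding infl_len_word_def by (intro sum_list_mono min_le_infl_len)
  finally show ?thesis .
qed

lemma length_le_infl_len_word: "length v \<le> infl_len_word m v"
proof -
  have "length v \<le> length v * min_infl_len m" using min_infl_len_pos[of m] by simp
  then show ?thesis using length_mult_min_infl_len_le[of v m] by linarith
qed

lemma ln_card_subst_pow_le: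
  assumes "\<And>c. ln (real (infl_card m c)) \<le> K * real (infl_len m c)"
  shows "ln (real (card (subst_pow \<theta> m v))) \<le> K * real (infl_len_word m v)"
  unfolding ln_card_subst_pow infl_len_word_eq_count sum_distrib_left
  by (intro sum_mono) (metis assms mult.left_commute mult_left_mono of_nat_0_le_iff)

lemma ln_card_subst_pow_ge:
  assumes "\<And>c. K * real (infl_len m c) \<le> ln (real (infl_card m c))"
  shows "K * real (infl_len_word m v) \<le> ln (real (card (subst_pow \<theta> m v)))"
  unfolding ln_card_subst_pow infl_len_word_eq_count sum_distrib_left
  by (intro sum_mono) (metis assms mult.left_commute mult_left_mono of_nat_0_le_iff)

lemma subst_pow_trim_left:
  "y \<in> subst_pow \<theta> m v \<Longrightarrow> y = ps @ w @ ss \<Longrightarrow> w \<noteq> [] \<Longrightarrow>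
    \<exists>v' ps'. suffix v' v \<and> ps' @ w @ ss \<in> subst_pow \<theta> m v' \<and> length ps' < max_infl_len m"
proof (induction v arbitrary: y ps)
  case (Cons c v)
  from Cons.prems(1) obtain y1 y2
    where y: "y = y1 @ y2" "y1 \<in> subst_pow \<theta> m [c]" "y2 \<in> subst_pow \<theta> m v"
    using subst_pow_append[of \<theta> m "[c]" v] by (auto simp: conc_def)
  show ?case
  proof (cases "length y1 \<le> length ps")
    case True
    from y(1) Cons.prems(2) have "y1 @ y2 = ps @ (w @ ss)" by simp
    then have "y2 = drop (length y1) ps @ w @ ss"
      using True by (auto simp: append_eq_append_conv_if)
    then obtain v' ps' where "suffix v' v" "ps' @ w @ ss \<in> subst_pow \<theta> m v'" "length ps' < max_infl_len m"
      using Cons.IH[OF y(3)] Cons.prems(3) by blast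
    then show ?thesis by (meson suffix_ConsI)
  next
    case False
    then have "length ps < max_infl_len m"
      using length_subst_pow_single[OF y(2)] infl_len_le_max[of m c] by simp
    then show ?thesis using Cons.prems by (intro exI[of _ "c # v"] exI[of _ ps]) auto
  qed
qed simp

lemma subst_pow_trim_right:
  "y \<in> subst_pow \<theta> m v \<Longrightarrow> y = ps @ w @ ss \<Longrightarrow> w \<noteq> [] \<Longrightarrow>
    \<exists>v' ss'. prefix v' v \<and> ps @ w @ ss' \<in> subst_pow \<theta> m v' \<and> length ss' < max_infl_len m"
proof (induction v arbitrary: y ss rule: rev_induct)
  case (snoc c v)
  from snoc.prems(1) obtain y1 y2
    where y: "y = y2 @ y1" "y1 \<in> subst_pow \<theta> m [c]" "y2 \<in> subst_pow \<theta> m v"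
    using subst_pow_append[of \<theta> m v "[c]"] by (auto simp: conc_def)
  show ?case
  proof (cases "length y1 \<le> length ss")
    case True
    from y(1) snoc.prems(2) have eq: "(ps @ w) @ ss = y2 @ y1" by simp
    have "length (ps @ w) \<le> length y2" using arg_cong[OF eq, of length] True by simp
    with eq have "y2 = ps @ w @ drop (length (ps @ w)) y2"
      by (metis append.assoc append_eq_append_conv_if append_take_drop_id)
    then obtain v' ss' where "prefix v' v" "ps @ w @ ss' \<in> subst_pow \<theta> m v'" "length ss' < max_infl_len m"
      using snoc.IH[OF y(3)] snoc.prems(3) by blast
    then show ?thesis by (metis prefix_snoc)
  next
    case False
    then have "length ss < max_infl_len m"
      using length_subst_pow_single[OF y(2)] infl_len_le_max[of m c] by simp
    then show ?thesis using snoc.prems by (intro exI[of _ "v @ [c]"] exI[of _ ss]) auto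
  qed
qed simp

lemma subst_pow_trim:
  assumes "y \<in> subst_pow \<theta> m v" "sublist w y" "w \<noteq> []"
  obtains v' y' where "sublist v' v" "y' \<in> subst_pow \<theta> m v'" "sublist w y'"
    "length y' < length w + 2 * max_infl_len m"
proof -
  obtain ps ss where "y = ps @ w @ ss" using assms(2) unfolding sublist_def by blast
  obtain v1 ps1 where v1: "suffix v1 v" "ps1 @ w @ ss \<in> subst_pow \<theta> m v1" "length ps1 < max_infl_len m"
    using subst_pow_trim_left[OF assms(1) \<open>y = ps @ w @ ss\<close> assms(3)] by blast
  obtain v2 ss2 where v2: "prefix v2 v1" "ps1 @ w @ ss2 \<in> subst_pow \<theta> m v2" "length ss2 < max_infl_len m"
    using subst_pow_trim_right[OF v1(2) refl assms(3)] by blast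
  have "sublist v2 v"
    using v1(1) v2(1) by (meson prefix_imp_sublist suffix_imp_sublist sublist_order.order_trans)
  moreover have "length (ps1 @ w @ ss2) < length w + 2 * max_infl_len m" using v1(3) v2(3) by simp
  ultimately show ?thesis using that v2(2) by blast
qed

lemma card_subst_pow_le_card_language_len:
  assumes "v @ [c] \<in> language \<theta>" "infl_len_word m v \<le> l" "l < infl_len_word m (v @ [c])"
  shows "card (subst_pow \<theta> m v) \<le> card (language_len \<theta> l)"
proof -
  define z where "z = (SOME x. x \<in> subst_pow \<theta> m [c])"
  have z: "z \<in> subst_pow \<theta> m [c]" unfolding z_def by (rule some_in_subst_pow)
  define f where "f x = take l (x @ z)" for x
  have "f ` subst_pow \<theta> m v \<subseteq> language_len \<theta> l"
  proof
    fix w assume "w \<in> f ` subst_pow \<theta> m v"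
    then obtain x where x: "x \<in> subst_pow \<theta> m v" "w = f x" by blast
    have xz: "x @ z \<in> subst_pow \<theta> m (v @ [c])"
      using x(1) z unfolding subst_pow_append conc_def by blast
    have "x @ z \<in> language \<theta>" by (rule language_subst_pow[OF assms(1) xz])
    then have "w \<in> language \<theta>" unfolding x(2) f_def by (rule language_sublist) (rule sublist_take)
    moreover have "length w = l"
      using length_subst_pow[OF xz] assms(3) unfolding x(2) f_def by simp
    ultimately show "w \<in> language_len \<theta> l" unfolding language_len_def by simp
  qed
  moreover have "inj_on f (subst_pow \<theta> m v)"
  proof (rule inj_onI)
    fix x x' assume "x \<in> subst_pow \<theta> m v" "x' \<in> subst_pow \<theta> m v" "f x = f x'"
    moreover have "take (infl_len_word m v) (f x) = x" if "x \<in> subst_pow \<theta> m v" for x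
      using length_subst_pow[OF that] assms(2) by (simp add: f_def min_def)
    ultimately show "x = x'" by metis
  qed
  ultimately show ?thesis by (intro card_inj_on_le finite_language_len)
qed

lemma infl_len_word_less_subset:
  "{v. infl_len_word m v < B} \<subseteq> {v. set v \<subseteq> UNIV \<and> length v \<le> B div min_infl_len m}"
proof
  fix v assume "v \<in> {v. infl_len_word m v < B}"
  then have "length v * min_infl_len m \<le> B" using length_mult_min_infl_len_le[of v m] by simp
  then show "v \<in> {v. set v \<subseteq> UNIV \<and> length v \<le> B div min_infl_len m}"
    using less_eq_div_iff_mult_less_eq[OF min_infl_len_pos] by simp
qed

lemma finite_infl_len_word_less: "finite {v. infl_len_word m v < B}"
  by (rule finite_subset[OF infl_len_word_less_subset finite_lists_length_le]) simp

lemma card_infl_len_word_less: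
  "card {v. infl_len_word m v < B}
    \<le> (B div min_infl_len m + 1) * card (UNIV :: 'a set) ^ (B div min_infl_len m)"
proof -
  define D where "D = B div min_infl_len m"
  have sub: "{v. infl_len_word m v < B} \<subseteq> {v. set v \<subseteq> UNIV \<and> length v \<le> D}"
    unfolding D_def by (rule infl_len_word_less_subset)
  have "card {v. infl_len_word m v < B} \<le> card {v. set v \<subseteq> (UNIV::'a set) \<and> length v \<le> D}"
    by (rule card_mono[OF finite_lists_length_le sub]) simp
  also have "\<dots> = (\<Sum>i\<le>D. card (UNIV :: 'a set) ^ i)" by (rule card_lists_length_le) simp
  also have "\<dots> \<le> (\<Sum>i\<le>D. card (UNIV :: 'a set) ^ D)"
    by (intro sum_mono power_increasing) (auto simp: Suc_le_eq finite_UNIV_card_ge_0)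
  finally show ?thesis by (simp add: D_def)
qed

lemma length_subst_pow_single_eq_1:
  assumes "\<And>j. (\<Sum>i\<in>UNIV. M i j) = 1" and "y \<in> subst_pow \<theta> m [b]"
  shows "length y = 1"
proof -
  have "(\<Sum>d\<in>UNIV. mat_pow M m d b) = 1" for b
  proof (induction m arbitrary: b)
    case (Suc m)
    have "(\<Sum>d\<in>UNIV. mat_pow M (Suc m) d b) = (\<Sum>k\<in>UNIV. (\<Sum>d\<in>UNIV. mat_pow M m d k) * M k b)"
      by (simp add: mat_mult_def sum_distrib_right) (rule sum.swap)
    then show ?case using Suc assms by simp
  qed simp
  then show ?thesis using length_subst_pow_single[OF assms(2)] infl_len_eq_col_sum[of m b] by simp
qed

lemma q1_eq_0_if_col_sums_1:
  assumes "\<And>j. (\<Sum>i\<in>UNIV. M i j) = 1"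
  shows "q1 \<theta> b = 0"
proof -
  have "u = v" if "u \<in> \<theta> b" "v \<in> \<theta> b" for u v
  proof -
    have "length u = 1" "length v = 1"
      using that length_subst_pow_single_eq_1[OF assms, of _ 1 b] by simp_all
    then obtain c c' where uv: "u = [c]" "v = [c']" by (auto simp: length_Suc_conv)
    have "Phi u = Phi v" using semi_compatible that unfolding semi_compatible_def by blast
    then have "count_list u c = count_list v c" unfolding Phi_def by (rule fun_cong)
    then show "u = v" using uv by (simp split: if_splits)
  qed
  moreover obtain u where "u \<in> \<theta> b" using random_subst unfolding is_random_subst_def by blast
  ultimately have "\<theta> b = {u}" by blast
  then show ?thesis by (simp add: q1_def)
qed

lemma language_len_empty_if_col_sums_1:
  assumes "\<And>j. (\<Sum>i\<in>UNIV. M i j) = 1" and "l \<ge> 2"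
  shows "language_len \<theta> l = {}"
proof -
  have "length w \<le> 1" if "w \<in> language \<theta>" for w
    using that length_subst_pow_single_eq_1[OF assms(1)] sublist_length_le
    unfolding language_def by fastforce
  then show ?thesis using assms(2) unfolding language_len_def by fastforce
qed

end

section \<open>Primitive substitutions: growth of inflation words\<close>

locale primitive_subst = semi_compatible_subst \<theta> for \<theta> :: "'a::finite \<Rightarrow> 'a list set" +
  fixes lam :: real and R :: "'a \<Rightarrow> real"
  assumes primitive: "primitive_matrix (subst_matrix \<theta>)"
    and PF_vector: "is_PF_right_eigenvector (subst_matrix \<theta>) lam R"
begin

abbreviation q1R :: real where "q1R \<equiv> \<Sum>a\<in>UNIV. q1 \<theta> a * R a"

lemma R_pos: "R i > 0"
  using PF_vector unfolding is_PF_right_eigenvector_def by auto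

lemma R_sum: "(\<Sum>i\<in>UNIV. R i) = 1"
  using PF_vector R_pos unfolding is_PF_right_eigenvector_def by (simp add: abs_of_pos)

lemma mvec_M_R: "mvec M R i = lam * R i"
  using PF_vector unfolding is_PF_right_eigenvector_def mvec_def by auto

lemma mat_pow_pos: obtains p where "p > 0" "\<And>i j. mat_pow M p i j > 0"
proof -
  from primitive obtain k where "k > 0" "\<forall>i j. mat_pow M k i j > 0"
    unfolding primitive_matrix_def by blast
  then show ?thesis using that by blast
qed

lemma lam_eq_col_sums: "lam = (\<Sum>j\<in>UNIV. (\<Sum>i\<in>UNIV. M i j) * R j)"
proof -
  have "lam = (\<Sum>i\<in>UNIV. lam * R i)" using R_sum by (simp flip: sum_distrib_left)
  also have "\<dots> = (\<Sum>i\<in>UNIV. \<Sum>j\<in>UNIV. M i j * R j)" using mvec_M_R by (simp add: mvec_def)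
  also have "\<dots> = (\<Sum>j\<in>UNIV. (\<Sum>i\<in>UNIV. M i j) * R j)"
    by (subst sum.swap) (simp add: sum_distrib_right)
  finally show ?thesis .
qed

lemma lam_ge_1: "lam \<ge> 1"
proof -
  have "(\<Sum>j\<in>UNIV. 1 * R j) \<le> (\<Sum>j\<in>UNIV. (\<Sum>i\<in>UNIV. M i j) * R j)"
    by (intro sum_mono mult_right_mono subst_matrix_col_sum_ge_1) (auto intro: less_imp_le R_pos)
  then show ?thesis using R_sum lam_eq_col_sums by simp
qed

lemma mat_pow_col_tendsto:
  fixes b :: 'a
  obtains c where "c > 0" "\<And>d. (\<lambda>k. mat_pow M k d b / lam ^ k) \<longlonglongrightarrow> c * R d"
proof -
  define A where "A = (\<lambda>i j. inverse lam * M i j)"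
  have A_pow: "mat_pow A k d j = mat_pow M k d j / lam ^ k" for k d j
    unfolding A_def mat_pow_scale by (simp add: field_simps power_inverse)
  obtain p where "p > 0" "\<And>i j. mat_pow M p i j > 0" using mat_pow_pos by blast
  then have A_pos: "mat_pow A p i j > 0" for i j using lam_ge_1 by (simp add: A_pow)
  have A_fixed: "mvec A R = R"
  proof
    fix i
    have "mvec A R i = inverse lam * mvec M R i" by (simp add: A_def mvec_def sum_distrib_left mult.assoc)
    then show "mvec A R i = R i" using mvec_M_R[of i] lam_ge_1 by simp
  qed
  have A_nonneg: "A i j \<ge> 0" for i j using lam_ge_1 subst_matrix_nonneg by (simp add: A_def)
  define e where "e j = (if j = b then 1 else 0 :: real)" for j
  have "e j \<ge> 0" "e b > 0" for j by (simp_all add: e_def)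
  then obtain c where "c > 0" and lim: "\<And>d. (\<lambda>k. mvec (mat_pow A k) e d) \<longlonglongrightarrow> c * R d"
    using mvec_pow_tendsto_fixed_vector[OF A_nonneg A_pos R_pos A_fixed] by metis
  moreover have "mvec (mat_pow A k) e d = mat_pow M k d b / lam ^ k" for k d
    by (simp add: mvec_def A_pow e_def flip: sum_divide_distrib)
  ultimately show ?thesis using that by simp
qed

lemma infl_len_q1_mat_pow_tendsto:
  fixes b :: 'a
  obtains c where "c > 0" "(\<lambda>k. real (infl_len k b) / lam ^ k) \<longlonglongrightarrow> c"
    "(\<lambda>k. q1_mat_pow k b / lam ^ k) \<longlonglongrightarrow> c * q1R"
proof -
  obtain c where "c > 0" and c: "\<And>d. (\<lambda>k. mat_pow M k d b / lam ^ k) \<longlonglongrightarrow> c * R d"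
    using mat_pow_col_tendsto[of b] by blast
  have "(\<lambda>k. \<Sum>d\<in>UNIV. mat_pow M k d b / lam ^ k) \<longlonglongrightarrow> (\<Sum>d\<in>UNIV. c * R d)"
    by (intro tendsto_sum c)
  then have "(\<lambda>k. real (infl_len k b) / lam ^ k) \<longlonglongrightarrow> c"
    by (simp add: infl_len_eq_col_sum sum_divide_distrib R_sum flip: sum_distrib_left)
  moreover have "(\<lambda>k. \<Sum>d\<in>UNIV. q1 \<theta> d * (mat_pow M k d b / lam ^ k)) \<longlonglongrightarrow> (\<Sum>d\<in>UNIV. q1 \<theta> d * (c * R d))"
    by (intro tendsto_sum tendsto_mult tendsto_const c)
  then have "(\<lambda>k. q1_mat_pow k b / lam ^ k) \<longlonglongrightarrow> c * q1R"
    by (simp add: q1_mat_pow_def sum_divide_distrib sum_distrib_left mult_ac)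
  ultimately show ?thesis using that \<open>c > 0\<close> by blast
qed

lemma infl_len_tendsto_at_top:
  assumes "lam > 1"
  shows "filterlim (\<lambda>m. real (infl_len m b)) at_top sequentially"
proof -
  obtain c where "c > 0" "(\<lambda>k. real (infl_len k b) / lam ^ k) \<longlonglongrightarrow> c"
    using infl_len_q1_mat_pow_tendsto[of b] by blast
  moreover have "filterlim (\<lambda>k. inverse (inverse (lam ^ k))) at_top sequentially"
    using assms by (intro filterlim_inverse_at_top LIMSEQ_inverse_realpow_zero) auto
  ultimately have
    "filterlim (\<lambda>k. real (infl_len k b) / lam ^ k * inverse (inverse (lam ^ k))) at_top sequentially"
    by (intro filterlim_tendsto_pos_mult_at_top)
  then show ?thesis using assms by simp
qed

lemma infl_entropy_tendsto_identical:
  assumes "identical_set_condition \<theta>"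
  shows "(\<lambda>m. infl_entropy m b) \<longlonglongrightarrow> q1R / lam"
proof -
  obtain c where c: "c > 0" "(\<lambda>k. real (infl_len k b) / lam ^ k) \<longlonglongrightarrow> c"
    "(\<lambda>k. q1_mat_pow k b / lam ^ k) \<longlonglongrightarrow> c * q1R"
    using infl_len_q1_mat_pow_tendsto[of b] by blast
  have "(\<lambda>k. (q1_mat_pow k b / lam ^ k) / (real (infl_len (Suc k) b) / lam ^ Suc k * lam))
      \<longlonglongrightarrow> (c * q1R) / (c * lam)"
    using lam_ge_1 c by (intro tendsto_intros LIMSEQ_Suc) auto
  moreover have "(q1_mat_pow k b / lam ^ k) / (real (infl_len (Suc k) b) / lam ^ Suc k * lam)
      = ln (real (infl_card (Suc k) b)) / real (infl_len (Suc k) b)" for k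
    using lam_ge_1 by (simp add: ln_infl_card_identical[OF assms] field_simps)
  ultimately have "(\<lambda>k. ln (real (infl_card (Suc k) b)) / real (infl_len (Suc k) b)) \<longlonglongrightarrow> q1R / lam"
    using c(1) by simp
  then show ?thesis by (rule LIMSEQ_imp_Suc)
qed

lemma infl_entropy_tendsto_disjoint:
  assumes "disjoint_set_condition \<theta>" "lam > 1"
  shows "(\<lambda>m. infl_entropy m b) \<longlonglongrightarrow> q1R / (lam - 1)"
proof -
  obtain c where c: "c > 0" "(\<lambda>k. real (infl_len k b) / lam ^ k) \<longlonglongrightarrow> c"
    "(\<lambda>k. q1_mat_pow k b / lam ^ k) \<longlonglongrightarrow> c * q1R"
    using infl_len_q1_mat_pow_tendsto[of b] by blast
  have lim: "(\<lambda>m. ((\<Sum>k<m. (q1_mat_pow k b / lam ^ k) * lam ^ k) / lam ^ m) / (real (infl_len m b) / lam ^ m))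
      \<longlonglongrightarrow> (c * q1R / (lam - 1)) / c"
    using c by (intro tendsto_intros tendsto_geometric_weighted_average assms(2)) auto
  have eq: "((\<Sum>k<m. (q1_mat_pow k b / lam ^ k) * lam ^ k) / lam ^ m) / (real (infl_len m b) / lam ^ m)
      = ln (real (infl_card m b)) / real (infl_len m b)" for m
  proof -
    have "(\<Sum>k<m. (q1_mat_pow k b / lam ^ k) * lam ^ k) = ln (real (infl_card m b))"
      using assms(2) by (simp add: ln_infl_card_disjoint[OF assms(1)])
    then show ?thesis using assms(2) by simp
  qed
  have "(c * q1R / (lam - 1)) / c = q1R / (lam - 1)" using c(1) by simp
  with lim show ?thesis unfolding eq by simp
qed

lemma q1R_nonneg: "q1R \<ge> 0"
proof -
  have "q1 \<theta> d \<ge> 0" for d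
    using random_subst unfolding is_random_subst_def q1_def by (simp add: Suc_le_eq card_gt_0_iff)
  then show ?thesis by (intro sum_nonneg mult_nonneg_nonneg) (auto intro: less_imp_le R_pos)
qed

end

section \<open>Entropy of the language\<close>

context primitive_subst
begin

lemma letter_occurs_in_own_inflation:
  obtains p z where "p > 0" "z \<in> subst_pow \<theta> p [a]" "a \<in> set z"
proof -
  obtain p where p: "p > 0" "\<And>i j. mat_pow M p i j > 0" using mat_pow_pos by blast
  define z where "z = (SOME x. x \<in> subst_pow \<theta> p [a])"
  have z: "z \<in> subst_pow \<theta> p [a]" unfolding z_def by (rule some_in_subst_pow)
  have "real (count_list z a) > 0" using count_list_subst_pow_single[OF z, of a] p(2) by simp
  then have "a \<in> set z" by (metis count_list_0_iff less_irrefl of_nat_0)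
  then show thesis using that p(1) z by blast
qed

lemma language_in_deep_inflation:
  assumes "w \<in> language \<theta>"
  shows "\<exists>a j u. j \<ge> m \<and> u \<in> subst_pow \<theta> j [a] \<and> sublist w u"
proof -
  obtain a j u where u: "u \<in> subst_pow \<theta> j [a]" "sublist w u"
    using assms unfolding language_def by blast
  obtain p z where pz: "p > 0" "z \<in> subst_pow \<theta> p [a]" "a \<in> set z"
    by (rule letter_occurs_in_own_inflation)
  have "\<exists>u'\<in>subst_pow \<theta> (j + n * p) [a]. sublist w u'" for n
  proof (induction n)
    case (Suc n)
    then obtain u' where u': "u' \<in> subst_pow \<theta> (j + n * p) [a]" "sublist w u'" by blast
    have "\<exists>u''\<in>subst_pow \<theta> (j + n * p + p) [a]. sublist u' u''"
      by (rule sublist_subst_pow_add_period[OF pz(2,3) u'(1)])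
    then show ?case using u'(2) sublist_order.order_trans by (metis add.assoc mult_Suc add.commute)
  qed (use u in auto)
  from this[of m] obtain u' where "u' \<in> subst_pow \<theta> (j + m * p) [a]" "sublist w u'" by blast
  moreover have "j + m * p \<ge> m" using pz(1) by (simp add: trans_le_add2)
  ultimately show ?thesis by blast
qed

lemma language_covered_by_inflation:
  assumes "w \<in> language \<theta>" "w \<noteq> []"
  obtains v y where "y \<in> subst_pow \<theta> m v" "sublist w y" "length y < length w + 2 * max_infl_len m"
proof -
  obtain a j u where u: "j \<ge> m" "u \<in> subst_pow \<theta> j [a]" "sublist w u"
    using language_in_deep_inflation[OF assms(1)] by blast
  then obtain v0 where "u \<in> subst_pow \<theta> m v0"
    using subst_pow_add[of \<theta> m "j - m" "[a]"] by auto
  then show ?thesis using subst_pow_trim[OF _ u(3) assms(2)] that by metis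
qed

lemma exists_word_at_inflation_length:
  assumes "lam > 1"
  obtains v c where "v @ [c] \<in> language \<theta>" "infl_len_word m v \<le> l" "l < infl_len_word m (v @ [c])"
proof -
  fix a :: 'a
  obtain N where "real (infl_len N a) \<ge> real (l + 1)"
    using infl_len_tendsto_at_top[OF assms, of a]
    by (metis eventually_at_top_linorder filterlim_at_top order_refl)
  define u where "u = (SOME x. x \<in> subst_pow \<theta> N [a])"
  have u: "u \<in> subst_pow \<theta> N [a]" unfolding u_def by (rule some_in_subst_pow)
  then have "length u \<ge> l + 1" using length_subst_pow_single \<open>real (infl_len N a) \<ge> _\<close> by simp
  define i where "i = (LEAST i. l < infl_len_word m (take i u))"
  have "l < infl_len_word m (take (l + 1) u)"
    using length_le_infl_len_word[of "take (l + 1) u" m] \<open>length u \<ge> l + 1\<close> by simp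
  then have i: "l < infl_len_word m (take i u)" "i \<le> l + 1"
    unfolding i_def by (auto intro: LeastI Least_le)
  then obtain j where j: "i = Suc j" by (cases i) (auto simp: infl_len_word_def)
  have "\<not> l < infl_len_word m (take j u)"
    using not_less_Least[of j "\<lambda>i. l < infl_len_word m (take i u)"] j unfolding i_def by simp
  moreover have "take i u = take j u @ [u ! j]"
    using i(2) j \<open>length u \<ge> l + 1\<close> by (simp add: take_Suc_conv_app_nth)
  moreover have "take i u \<in> language \<theta>"
    using language_sublist[OF subst_pow_single_in_language[OF u]] by (metis sublist_take)
  ultimately show thesis using that i(1) by (metis not_less)
qed

lemma language_len_lower_bound:
  assumes "lam > 1" and lb: "\<And>c. K * real (infl_len m c) \<le> ln (real (infl_card m c))"
  shows "K * real l - \<bar>K\<bar> * real (max_infl_len m) \<le> ln (real (card (language_len \<theta> l)))"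
proof -
  obtain v c where v: "v @ [c] \<in> language \<theta>" "infl_len_word m v \<le> l" "l < infl_len_word m (v @ [c])"
    by (rule exists_word_at_inflation_length[OF assms(1)])
  have w: "real (infl_len_word m v) \<le> real l"
    and l: "real l \<le> real (infl_len_word m v) + real (max_infl_len m)"
    using v(2,3) infl_len_le_max[of m c] by (simp_all add: infl_len_word_def)
  have "K * real l - \<bar>K\<bar> * real (max_infl_len m) \<le> K * real (infl_len_word m v)"
  proof (cases "K \<ge> 0")
    case True
    have "K * real l \<le> K * (real (infl_len_word m v) + real (max_infl_len m))"
      using l True by (rule mult_left_mono)
    then show ?thesis using True by (simp add: algebra_simps)
  next
    case False
    then have "K * real l \<le> K * real (infl_len_word m v)" using w by (intro mult_left_mono_neg) auto
    moreover have "\<bar>K\<bar> * real (max_infl_len m) \<ge> 0" by simp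
    ultimately show ?thesis by linarith
  qed
  also have "\<dots> \<le> ln (real (card (subst_pow \<theta> m v)))" by (rule ln_card_subst_pow_ge[OF lb])
  also have "\<dots> \<le> ln (real (card (language_len \<theta> l)))"
    using card_subst_pow_le_card_language_len[OF v] card_subst_pow_pos[of m v] by simp
  finally show ?thesis .
qed

lemma card_language_len_le:
  assumes "l \<ge> 1"
  shows "card (language_len \<theta> l)
    \<le> (\<Sum>v\<in>{v. infl_len_word m v < l + 2 * max_infl_len m}. card (subst_pow \<theta> m v) * (l + 2 * max_infl_len m))"
proof -
  define B where "B = l + 2 * max_infl_len m"
  define V where "V = {v. infl_len_word m v < B}"
  define S where "S y = {w. sublist w y \<and> length w = l}" for y :: "'a list"
  have "finite V" unfolding V_def by (rule finite_infl_len_word_less)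
  have finite_S: "finite (S y)" for y
  proof -
    have "S y \<subseteq> set (sublists y)" unfolding S_def set_sublists_eq by auto
    then show ?thesis using finite_subset by blast
  qed
  have card_S: "card (S y) \<le> B" if "v \<in> V" "y \<in> subst_pow \<theta> m v" for v y
    using card_sublists_length_eq[of y l] length_subst_pow[OF that(2)] that(1)
    unfolding S_def V_def by simp
  have "language_len \<theta> l \<subseteq> (\<Union>v\<in>V. \<Union>y\<in>subst_pow \<theta> m v. S y)"
  proof
    fix w assume "w \<in> language_len \<theta> l"
    then have w: "w \<in> language \<theta>" "length w = l" "w \<noteq> []"
      using assms unfolding language_len_def by auto
    obtain v y where "y \<in> subst_pow \<theta> m v" "sublist w y" "length y < length w + 2 * max_infl_len m"
      using language_covered_by_inflation[OF w(1,3)] by blast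
    then show "w \<in> (\<Union>v\<in>V. \<Union>y\<in>subst_pow \<theta> m v. S y)"
      using w length_subst_pow unfolding V_def B_def S_def by fastforce
  qed
  then have "card (language_len \<theta> l) \<le> card (\<Union>v\<in>V. \<Union>y\<in>subst_pow \<theta> m v. S y)"
    by (intro card_mono) (auto simp: \<open>finite V\<close> finite_subst_pow finite_S)
  also have "\<dots> \<le> (\<Sum>v\<in>V. \<Sum>y\<in>subst_pow \<theta> m v. card (S y))"
    by (intro order.trans[OF card_UN_le[OF \<open>finite V\<close>]] sum_mono card_UN_le finite_subst_pow)
  also have "\<dots> \<le> (\<Sum>v\<in>V. card (subst_pow \<theta> m v) * B)"
    by (intro sum_mono order.trans[OF sum_bounded_above[OF card_S]]) auto
  finally show ?thesis unfolding V_def B_def .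
qed

lemma card_language_len_le_exp:
  assumes ub: "\<And>c. ln (real (infl_card m c)) \<le> K * real (infl_len m c)" and "K \<ge> 0" "l \<ge> 1"
  defines "B \<equiv> l + 2 * max_infl_len m"
  shows "real (card (language_len \<theta> l))
    \<le> (real B + 1) * real (card (UNIV :: 'a set)) ^ (B div min_infl_len m) * (exp (K * real B) * (real B + 1))"
proof -
  define D where "D = B div min_infl_len m"
  define n where "n = card (UNIV :: 'a set)"
  have card_subst_pow: "real (card (subst_pow \<theta> m v)) \<le> exp (K * real B)"
    if "infl_len_word m v < B" for v
  proof -
    have "ln (real (card (subst_pow \<theta> m v))) \<le> K * real B"
      using ln_card_subst_pow_le[OF ub, of v] that \<open>K \<ge> 0\<close>
      by (meson less_imp_le mult_left_mono of_nat_le_iff order_trans)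
    then show ?thesis using card_subst_pow_pos[of m v] by (metis exp_le_cancel_iff exp_ln of_nat_0_less_iff)
  qed
  have "real (card (language_len \<theta> l))
      \<le> (\<Sum>v\<in>{v. infl_len_word m v < B}. real (card (subst_pow \<theta> m v)) * real B)"
    using card_language_len_le[OF \<open>l \<ge> 1\<close>, of m] unfolding B_def[symmetric]
    by (metis (no_types, lifting) of_nat_le_iff of_nat_mult of_nat_sum sum.cong)
  also have "\<dots> \<le> (\<Sum>v\<in>{v. infl_len_word m v < B}. exp (K * real B) * real B)"
    by (intro sum_mono mult_right_mono card_subst_pow) auto
  also have "\<dots> = real (card {v. infl_len_word m v < B}) * (exp (K * real B) * real B)" by simp
  also have "\<dots> \<le> real ((D + 1) * n ^ D) * (exp (K * real B) * real B)"
    using card_infl_len_word_less[of m B] unfolding D_def n_def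
    by (intro mult_right_mono) (simp_all only: of_nat_le_iff, simp)
  also have "\<dots> = (real D + 1) * real n ^ D * (exp (K * real B) * real B)" by (simp add: algebra_simps)
  also have "\<dots> \<le> (real B + 1) * real n ^ D * (exp (K * real B) * (real B + 1))"
    unfolding D_def by (intro mult_mono mult_right_mono mult_left_mono) (auto simp: div_le_dividend)
  finally show ?thesis unfolding D_def n_def .
qed

lemma language_len_upper_bound:
  assumes ub: "\<And>c. ln (real (infl_card m c)) \<le> K * real (infl_len m c)" and "K \<ge> 0" "l \<ge> 1"
  defines "B \<equiv> l + 2 * max_infl_len m"
  shows "ln (real (card (language_len \<theta> l)))
    \<le> 2 * ln (real B + 1) + real B / real (min_infl_len m) * ln (card (UNIV :: 'a set)) + K * real B"
proof -
  define D where "D = B div min_infl_len m"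
  define n where "n = card (UNIV :: 'a set)"
  define X where "X = (real B + 1) * real n ^ D * (exp (K * real B) * (real B + 1))"
  have "n \<ge> 1" unfolding n_def by (simp add: Suc_le_eq finite_UNIV_card_ge_0)
  have "real D * real (min_infl_len m) \<le> real B"
    unfolding D_def by (metis div_times_less_eq_dividend of_nat_le_iff of_nat_mult)
  then have "real D * ln (real n) \<le> real B / real (min_infl_len m) * ln (real n)"
    using min_infl_len_pos[of m] \<open>n \<ge> 1\<close> by (intro mult_right_mono) (auto simp: field_simps)
  moreover have "ln X = 2 * ln (real B + 1) + real D * ln (real n) + K * real B"
    using \<open>n \<ge> 1\<close> by (simp add: X_def ln_mult ln_realpow)
  moreover have "ln (real (card (language_len \<theta> l))) \<le> ln X"
  proof (cases "card (language_len \<theta> l) = 0")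
    case True
    have "1 \<le> X" unfolding X_def using \<open>n \<ge> 1\<close> \<open>K \<ge> 0\<close> by (intro mult_ge1_I) auto
    then show ?thesis using True by simp
  next
    case False
    then show ?thesis
      using card_language_len_le_exp[OF assms(1-3)] unfolding X_def D_def n_def B_def by simp
  qed
  ultimately show ?thesis unfolding n_def by linarith
qed

lemma eventually_entropy_gt:
  assumes "lam > 1" and lb: "\<And>c. K * real (infl_len m c) \<le> ln (real (infl_card m c))" and "K' < K"
  shows "\<forall>\<^sub>F l in sequentially. K' < ln (real (card (language_len \<theta> l))) / real l"
proof -
  have "(\<lambda>l. K - \<bar>K\<bar> * real (max_infl_len m) / real l) \<longlonglongrightarrow> K - 0"
    by (intro tendsto_intros)
  then have ev: "\<forall>\<^sub>F l in sequentially. K' < K - \<bar>K\<bar> * real (max_infl_len m) / real l"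
    using \<open>K' < K\<close> by (intro order_tendstoD(1)) auto
  have bound: "K - \<bar>K\<bar> * real (max_infl_len m) / real l \<le> ln (real (card (language_len \<theta> l))) / real l"
    if "l \<ge> 1" for l
  proof -
    have "(K * real l - \<bar>K\<bar> * real (max_infl_len m)) / real l \<le> ln (real (card (language_len \<theta> l))) / real l"
      using language_len_lower_bound[OF assms(1) lb, of l] that by (intro divide_right_mono) auto
    then show ?thesis using that by (simp add: diff_divide_distrib)
  qed
  show ?thesis using ev eventually_ge_at_top[of 1]
    by eventually_elim (use bound in \<open>meson less_le_trans\<close>)
qed

lemma eventually_entropy_lt:
  assumes ub: "\<And>c. ln (real (infl_card m c)) \<le> K * real (infl_len m c)" and "K \<ge> 0"
    and "ln (card (UNIV :: 'a set)) / real (min_infl_len m) + K < K'"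
  shows "\<forall>\<^sub>F l in sequentially. ln (real (card (language_len \<theta> l))) / real l < K'"
proof -
  define a where "a = real (2 * max_infl_len m)"
  define c where "c = ln (card (UNIV :: 'a set)) / real (min_infl_len m)"
  define U where
    "U l = 2 * (ln (real l + (a + 1)) / real l) + (1 + a / real l) * c + K * (1 + a / real l)" for l
  have "U \<longlonglongrightarrow> 2 * 0 + (1 + 0) * c + K * (1 + 0)"
    unfolding U_def by (intro tendsto_intros tendsto_ln_add_const_over)
  then have ev: "\<forall>\<^sub>F l in sequentially. U l < K'"
    using assms(3) by (intro order_tendstoD(2)) (auto simp: c_def)
  have bound: "ln (real (card (language_len \<theta> l))) / real l \<le> U l" if "l \<ge> 1" for l
  proof -
    have "ln (real (card (language_len \<theta> l))) \<le> 2 * ln (real l + (a + 1)) + (real l + a) * c + K * (real l + a)"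
      using language_len_upper_bound[OF ub \<open>K \<ge> 0\<close> that] by (simp add: a_def c_def add.assoc)
    then have "ln (real (card (language_len \<theta> l))) / real l
        \<le> (2 * ln (real l + (a + 1)) + (real l + a) * c + K * (real l + a)) / real l"
      by (intro divide_right_mono) auto
    also have "\<dots> = U l" using that by (simp add: U_def field_simps)
    finally show ?thesis .
  qed
  show ?thesis using ev eventually_ge_at_top[of 1]
    by eventually_elim (use bound in \<open>meson le_less_trans\<close>)
qed

lemma entropy_tendsto:
  assumes "lam > 1" "T \<ge> 0"
    and infl_entropy: "\<And>b. (\<lambda>m. infl_entropy m b) \<longlonglongrightarrow> T"
  shows "(\<lambda>l. ln (real (card (language_len \<theta> l))) / real l) \<longlonglongrightarrow> T"
proof (rule order_tendstoI)
  fix a assume "a < T"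
  have "\<forall>\<^sub>F m in sequentially. \<forall>b. (a + T) / 2 < ln (real (infl_card m b)) / real (infl_len m b)"
    using \<open>a < T\<close> by (intro eventually_all_finite order_tendstoD(1)[OF infl_entropy]) simp
  then obtain m where "\<forall>b. (a + T) / 2 < ln (real (infl_card m b)) / real (infl_len m b)"
    unfolding eventually_sequentially by blast
  then have lb: "(a + T) / 2 * real (infl_len m b) \<le> ln (real (infl_card m b))" for b
    using infl_len_pos[of m b] by (meson less_imp_le of_nat_0_less_iff pos_less_divide_eq)
  show "\<forall>\<^sub>F l in sequentially. a < ln (real (card (language_len \<theta> l))) / real l"
    by (rule eventually_entropy_gt[OF assms(1) lb]) (use \<open>a < T\<close> in simp)
next
  fix a assume "T < a"
  define \<epsilon> where "\<epsilon> = (a - T) / 3"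
  define lnn where "lnn = ln (card (UNIV :: 'a set))"
  have "\<epsilon> > 0" using \<open>T < a\<close> by (simp add: \<epsilon>_def)
  have "\<forall>\<^sub>F m in sequentially. \<forall>b. ln (real (infl_card m b)) / real (infl_len m b) < T + \<epsilon>
      \<and> real (infl_len m b) \<ge> lnn / \<epsilon>"
    using \<open>\<epsilon> > 0\<close> infl_len_tendsto_at_top[OF assms(1)]
    by (intro eventually_all_finite eventually_conj order_tendstoD(2)[OF infl_entropy])
      (auto simp: filterlim_at_top)
  then obtain m where m: "\<forall>b. ln (real (infl_card m b)) / real (infl_len m b) < T + \<epsilon>
      \<and> real (infl_len m b) \<ge> lnn / \<epsilon>"
    unfolding eventually_sequentially by blast
  then have ub: "ln (real (infl_card m b)) \<le> (T + \<epsilon>) * real (infl_len m b)" for b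
    using infl_len_pos[of m b] by (meson less_imp_le of_nat_0_less_iff pos_divide_less_eq)
  have "min_infl_len m \<in> range (infl_len m)" unfolding min_infl_len_def by (intro Min_in) auto
  then have "lnn / real (min_infl_len m) \<le> \<epsilon>"
    using m \<open>\<epsilon> > 0\<close> min_infl_len_pos[of m] by (auto simp: field_simps)
  moreover have "a = T + 3 * \<epsilon>" by (simp add: \<epsilon>_def field_simps)
  ultimately have "lnn / real (min_infl_len m) + (T + \<epsilon>) < a" using \<open>\<epsilon> > 0\<close> by linarith
  moreover have "T + \<epsilon> \<ge> 0" using \<open>T \<ge> 0\<close> \<open>\<epsilon> > 0\<close> by simp
  ultimately show "\<forall>\<^sub>F l in sequentially. ln (real (card (language_len \<theta> l))) / real l < a"
    using eventually_entropy_lt[OF ub] unfolding lnn_def by blast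
qed

lemma col_sums_eq_1_if_lam_eq_1:
  assumes "lam = 1"
  shows "(\<Sum>i\<in>UNIV. M i j) = 1"
proof -
  have "(\<Sum>j\<in>UNIV. ((\<Sum>i\<in>UNIV. M i j) - 1) * R j) = 0"
    using lam_eq_col_sums assms R_sum by (simp add: algebra_simps sum_subtractf)
  moreover have "((\<Sum>i\<in>UNIV. M i j) - 1) * R j \<ge> 0" for j
    using subst_matrix_col_sum_ge_1[of j] R_pos[of j] by simp
  ultimately have "((\<Sum>i\<in>UNIV. M i j) - 1) * R j = 0"
    by (simp add: sum_nonneg_eq_0_iff)
  then show ?thesis using R_pos[of j] by simp
qed

lemma entropy_tendsto_lam_eq_1:
  assumes "lam = 1"
  shows "(\<lambda>l. ln (real (card (language_len \<theta> l))) / real l) \<longlonglongrightarrow> 0"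
proof (rule Lim_transform_eventually[OF tendsto_const])
  show "\<forall>\<^sub>F l in sequentially. 0 = ln (real (card (language_len \<theta> l))) / real l"
    using eventually_ge_at_top[of "2::nat"]
    by eventually_elim (simp add: language_len_empty_if_col_sums_1 col_sums_eq_1_if_lam_eq_1[OF assms])
qed

end

theorem mainTheorem9:
  fixes \<theta> :: "'a::finite \<Rightarrow> 'a list set" and lam :: real and R :: "'a \<Rightarrow> real"
  assumes "is_random_subst \<theta>"
    and "semi_compatible \<theta>"
    and "primitive_matrix (subst_matrix \<theta>)"
    and "is_PF_eigenvalue (subst_matrix \<theta>) lam"
    and "is_PF_right_eigenvector (subst_matrix \<theta>) lam R"
  shows "(identical_set_condition \<theta> \<longrightarrow>
           (\<lambda>l. ln (real (card (language_len \<theta> l))) / real l)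
             \<longlonglongrightarrow> (1 / lam) * (\<Sum>a\<in>UNIV. q1 \<theta> a * R a)) \<and>
         (disjoint_set_condition \<theta> \<longrightarrow>
           (\<lambda>l. ln (real (card (language_len \<theta> l))) / real l)
             \<longlonglongrightarrow> (1 / (lam - 1)) * (\<Sum>a\<in>UNIV. q1 \<theta> a * R a))"
proof -
  interpret primitive_subst \<theta> lam R
    using assms by unfold_locales
  show ?thesis
  proof (cases "lam = 1")
    case True
    then show ?thesis
      using entropy_tendsto_lam_eq_1 q1_eq_0_if_col_sums_1[OF col_sums_eq_1_if_lam_eq_1] by simp
  next
    case False
    with lam_ge_1 have "lam > 1" by simp
    then show ?thesis
      using entropy_tendsto infl_entropy_tendsto_identical infl_entropy_tendsto_disjoint q1R_nonneg by simp
  qed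
qed

end
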